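(* Assume $\delta>d$, $\alpha=\gamma/(\delta-d)$, and that $f$ is not a polynomial product. Then on $\mathbb{C}^2\setminus B_f$ the limits $$G_z^\lambda(w)=\lim_{n\to\infty}\frac{1}{\delta^n}\log^+|Q_z^n(w)|,\qquad G_f(z,w)=\lim_{n\to\infty}\frac{1}{\delta^n}\log^+|f^n(z,w)|$$ exist and satisfy $G_z^\lambda(w)=\alpha G_p(z)$ and $G_f(z,w)=\max\{\alpha,1\}G_p(z)$, where $|(z,w)|=\max\{|z|,|w|\}$.
   Context: Let $p(z)=z^\delta+O(z^{\delta-1})$ be a monic polynomial of degree $\delta\ge 2$, and let $q(z,w)=b(z)w^d+(\text{terms of lower degree in } w)$ be a polynomial with $d=\deg_w q\ge 2$, where $b$ is a monic polynomial of degree $\gamma\ge 0$. Let $f(z,w)=(p(z),q(z,w))$; $f$ is a polynomial product if $q$ does not depend on $z$. Write $Q_z^n=q_{p^{n-1}(z)}\circ\cdots\circ q_{p(z)}\circ q_z$ with $q_z=q(z,\cdot)$, so $f^n(z,w)=(p^n(z),Q_z^n(w))$. Let $A_p=\{z: p^n(z)\to\infty\}$ and $G_p(z)=\lim_n\delta^{-n}\log^+|p^n(z)|$. For $\delta>d$, $\alpha=\max\{n_j/(\delta-m_j)\}$ over monomials $z^{n_j}w^{m_j}$ appearing in $q$ with nonzero coefficient. Let $W_R=\{(z,w):|z|>R,\ |w|>R|z|^\alpha\}$, fix $R$ large enough that $f(W_R)\subset W_R$ and $W_R\subset A_p\times\mathbb{C}$, set $A_f=\bigcup_{n\ge0}f^{-n}(W_R)$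 and $B_f=(A_p\times\mathbb{C})\setminus A_f$. *)

theory Defs
  imports "HOL-Analysis.Analysis" "HOL-Computational_Algebra.Polynomial"
begin

text \<open>The two-variable polynomial q(z,w) is represented as a polynomial in w whose
coefficients are polynomials in z: q = sum_j b_j(z) w^j.\<close>

definition qeval :: "complex poly poly \<Rightarrow> complex \<Rightarrow> complex \<Rightarrow> complex" where
  "qeval q z w = poly (map_poly (\<lambda>a. poly a z) q) w"

definition logplus :: "real \<Rightarrow> real" where
  "logplus x = max 0 (ln x)"

definition fmap :: "complex poly \<Rightarrow> complex poly poly \<Rightarrow> complex \<times> complex \<Rightarrow> complex \<times> complex" where
  "fmap p q = (\<lambda>(z, w). (poly p z, qeval q z w))"

fun Qiter :: "complex poly \<Rightarrow> complex poly poly \<Rightarrow> nat \<Rightarrow> complex \<Rightarrow> complex \<Rightarrow> complex" where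
  "Qiter p q 0 z w = w"
| "Qiter p q (Suc n) z w = qeval q ((poly p ^^ n) z) (Qiter p q n z w)"

text \<open>f is a polynomial product iff q does not depend on z.\<close>
definition poly_product :: "complex poly poly \<Rightarrow> bool" where
  "poly_product q \<longleftrightarrow> (\<forall>m. degree (coeff q m) = 0)"

definition escape_set :: "complex poly \<Rightarrow> complex set" where
  "escape_set p = {z. filterlim (\<lambda>n. (poly p ^^ n) z) at_infinity sequentially}"

definition Green_p :: "complex poly \<Rightarrow> complex \<Rightarrow> real" where
  "Green_p p z = lim (\<lambda>n. logplus (cmod ((poly p ^^ n) z)) / real (degree p) ^ n)"

definition alpha_exp :: "complex poly \<Rightarrow> complex poly poly \<Rightarrow> real" where
  "alpha_exp p q = Max {real n / (real (degree p) - real m) | n m. coeff (coeff q m) n \<noteq> 0}"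

definition W_set :: "real \<Rightarrow> real \<Rightarrow> (complex \<times> complex) set" where
  "W_set \<alpha> R = {(z, w). cmod z > R \<and> cmod w > R * cmod z powr \<alpha>}"

definition A_f :: "complex poly \<Rightarrow> complex poly poly \<Rightarrow> real \<Rightarrow> (complex \<times> complex) set" where
  "A_f p q R = (\<Union>n. (fmap p q ^^ n) -` W_set (alpha_exp p q) R)"

definition B_f :: "complex poly \<Rightarrow> complex poly poly \<Rightarrow> real \<Rightarrow> (complex \<times> complex) set" where
  "B_f p q R = (escape_set p \<times> UNIV) - A_f p q R"

definition maxnorm :: "complex \<times> complex \<Rightarrow> real" where
  "maxnorm zw = max (cmod (fst zw)) (cmod (snd zw))"

end

theory Submission
  imports Defs "HOL-Computational_Algebra.Fundamental_Theorem_Algebra"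
begin

(* Write z_n = p^n(z), w_n = Q_z^n(w) and rate(x) = lim logplus |x_n| / \<delta>^n.
   The z-rate is Green_p p z for every z: on escaping orbits ln|z_n| satisfies
   |ln|z_{n+1}| - \<delta> ln|z_n|| \<le> ln 2, so ln|z_n|/\<delta>^n is a convergent telescoping series.
   For the w-rate there are two cases.
   * z does not escape: |z_n| stays bounded, so ln^+|w_{n+1}| \<le> C + d ln^+|w_n| and
     the w-rate is 0 = \<alpha> Green_p p z because d < \<delta>.
   * z escapes: since (z,w) \<notin> B_f, the orbit enters the invariant region W_R and stays there.
     In W_R every monomial of q is dominated by |z|^\<gamma> |w|^d, and |w| > R|z|^\<alpha>, so the
     defect e_n = ln|w_n| - \<alpha> ln|z_n| is bounded below and satisfies e_{n+1} \<le> C + d e_n;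
     hence e_n/\<delta>^n \<rightarrow> 0 and the w-rate equals \<alpha> times the z-rate.
   The rate of the max-norm is the maximum of the two rates, max(1,\<alpha>) Green_p p z.  The monicity of the leading coefficient
   of q and the hypothesis that f is not a polynomial product are not needed. *)

lemma rec_bound:
  fixes x :: "nat \<Rightarrow> real"
  assumes "0 \<le> c" "2 \<le> d" "\<And>n. x (Suc n) \<le> c + d * x n"
  shows "x n \<le> d ^ n * (\<bar>x 0\<bar> + c) - c"
proof (induction n)
  case 0 show ?case using abs_ge_self[of "x 0"] by simp
next
  case (Suc n)
  have "x (Suc n) \<le> c + d * x n" by (rule assms(3))
  also have "\<dots> \<le> c + d * (d ^ n * (\<bar>x 0\<bar> + c) - c)"
    using Suc assms(2) by (intro add_left_mono mult_left_mono) auto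
  also have "\<dots> = d ^ Suc n * (\<bar>x 0\<bar> + c) - c - (d - 2) * c" by (simp add: algebra_simps)
  also have "\<dots> \<le> d ^ Suc n * (\<bar>x 0\<bar> + c) - c" using assms by simp
  finally show ?case .
qed

lemma geometric_squeeze_zero:
  fixes x :: "nat \<Rightarrow> real"
  assumes "\<And>n. L \<le> x n" "\<And>n. x n \<le> d ^ n * A" "0 \<le> d" "d < \<delta>" "1 < \<delta>"
  shows "(\<lambda>n. x n / \<delta> ^ n) \<longlonglongrightarrow> 0"
proof (rule tendsto_sandwich[where f = "\<lambda>n. L * (1 / \<delta>) ^ n" and h = "\<lambda>n. A * (d / \<delta>) ^ n"])
  have "\<delta> > 0" using assms by linarith
  thus "\<forall>\<^sub>F n in sequentially. L * (1 / \<delta>) ^ n \<le> x n / \<delta> ^ n"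
    and "\<forall>\<^sub>F n in sequentially. x n / \<delta> ^ n \<le> A * (d / \<delta>) ^ n"
    using assms(1,2) by (auto simp: power_divide divide_right_mono mult.commute)
  show "(\<lambda>n. L * (1 / \<delta>) ^ n) \<longlonglongrightarrow> 0" "(\<lambda>n. A * (d / \<delta>) ^ n) \<longlonglongrightarrow> 0"
    using assms by (auto intro!: tendsto_mult_right_zero LIMSEQ_power_zero)
qed

(* If a_{n+1} is within C of \<delta> a_n, then a_n/\<delta>^n converges: its increments are O(\<delta>^-n). *)
lemma convergent_rate_of_almost_geometric:
  fixes a :: "nat \<Rightarrow> real"
  assumes d1: "1 < \<delta>" and bound: "\<And>n. \<bar>a (Suc n) - \<delta> * a n\<bar> \<le> C"
  shows "convergent (\<lambda>n. a n / \<delta> ^ n)"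
proof -
  define g where "g n = a (Suc n) / \<delta> ^ Suc n - a n / \<delta> ^ n" for n
  have g_bound: "norm (g n) \<le> (C / \<delta>) * (1 / \<delta>) ^ n" for n
  proof -
    have "g n = (a (Suc n) - \<delta> * a n) / \<delta> ^ Suc n" using d1 by (simp add: g_def field_simps)
    hence "norm (g n) = \<bar>a (Suc n) - \<delta> * a n\<bar> / \<delta> ^ Suc n" using d1 by simp
    also have "\<dots> \<le> C / \<delta> ^ Suc n" using bound d1 by (intro divide_right_mono) auto
    also have "\<dots> = (C / \<delta>) * (1 / \<delta>) ^ n" by (simp add: power_divide)
    finally show ?thesis .
  qed
  have "summable (\<lambda>n. (C / \<delta>) * (1 / \<delta>) ^ n)"
    using d1 by (intro summable_mult summable_geometric) auto
  hence "summable g" by (rule summable_comparison_test[rotated]) (use g_bound in auto)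
  hence "(\<lambda>n. a 0 + (\<Sum>i<n. g i)) \<longlonglongrightarrow> a 0 + suminf g"
    by (intro tendsto_add tendsto_const summable_LIMSEQ)
  moreover have "a n / \<delta> ^ n = a 0 + (\<Sum>i<n. g i)" for n
    unfolding g_def using sum_lessThan_telescope[of "\<lambda>i. a i / \<delta> ^ i" n] by simp
  ultimately show ?thesis unfolding convergent_def by auto
qed

lemma rate_shift:
  fixes x :: "nat \<Rightarrow> real"
  assumes "\<delta> > 0"
  shows "(\<lambda>n. x n / \<delta> ^ n) \<longlonglongrightarrow> L \<longleftrightarrow> (\<lambda>k. x (k + M) / \<delta> ^ k) \<longlonglongrightarrow> \<delta> ^ M * L"
proof -
  have shifted: "x (k + M) / \<delta> ^ k = \<delta> ^ M * (x (k + M) / \<delta> ^ (k + M))" for k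
    using assms by (simp add: power_add)
  show ?thesis
  proof
    assume "(\<lambda>n. x n / \<delta> ^ n) \<longlonglongrightarrow> L"
    hence "(\<lambda>k. x (k + M) / \<delta> ^ (k + M)) \<longlonglongrightarrow> L" by (rule LIMSEQ_ignore_initial_segment)
    thus "(\<lambda>k. x (k + M) / \<delta> ^ k) \<longlonglongrightarrow> \<delta> ^ M * L"
      unfolding shifted by (rule tendsto_mult_left)
  next
    assume "(\<lambda>k. x (k + M) / \<delta> ^ k) \<longlonglongrightarrow> \<delta> ^ M * L"
    hence "(\<lambda>k. x (k + M) / \<delta> ^ k * (1 / \<delta> ^ M)) \<longlonglongrightarrow> \<delta> ^ M * L * (1 / \<delta> ^ M)"
      by (rule tendsto_mult_right)
    hence "(\<lambda>k. x (k + M) / \<delta> ^ (k + M)) \<longlonglongrightarrow> L"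
      using assms by (simp add: power_add)
    thus "(\<lambda>n. x n / \<delta> ^ n) \<longlonglongrightarrow> L" by (rule LIMSEQ_offset)
  qed
qed

(* The key estimate for the w-rate: if a grows like \<delta> a and u_{k+1} \<le> C + \<gamma> a_k + d u_k
   with \<gamma> = \<alpha>(\<delta> - d), then the defect u - \<alpha> a (assumed bounded below) satisfies the same
   linear inequality as in rec_bound, hence is negligible against \<delta>^k. *)
lemma defect_negligible:
  fixes a u :: "nat \<Rightarrow> real"
  assumes "2 \<le> d" "d < \<delta>" "0 \<le> \<alpha>" "\<gamma> = \<alpha> * (\<delta> - d)" "0 \<le> Ca" "0 \<le> Cu"
    and a_rec: "\<And>k. \<delta> * a k - Ca \<le> a (Suc k)"
    and u_rec: "\<And>k. u (Suc k) \<le> Cu + \<gamma> * a k + d * u k"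
    and lower: "\<And>k. L \<le> u k - \<alpha> * a k"
  shows "(\<lambda>k. (u k - \<alpha> * a k) / \<delta> ^ k) \<longlonglongrightarrow> 0"
proof -
  define e where "e k = u k - \<alpha> * a k" for k
  define c where "c = Cu + \<alpha> * Ca"
  have c: "0 \<le> c" using assms by (simp add: c_def)
  have e_rec: "e (Suc k) \<le> c + d * e k" for k
  proof -
    have "\<alpha> * (\<delta> * a k - Ca) \<le> \<alpha> * a (Suc k)" using a_rec assms(3) by (rule mult_left_mono)
    thus ?thesis using u_rec[of k] by (simp add: e_def c_def assms(4) algebra_simps)
  qed
  have "e k \<le> d ^ k * (\<bar>e 0\<bar> + c)" for k
    using rec_bound[of c d e k, OF c assms(1) e_rec] c by linarith
  thus ?thesis
    using geometric_squeeze_zero[of L e d "\<bar>e 0\<bar> + c" \<delta>] lower assms(1,2)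
    unfolding e_def by simp
qed

lemma ln_near_power:
  fixes X Y :: real
  assumes "0 < X" "X ^ n / 2 \<le> Y" "Y \<le> 2 * X ^ n"
  shows "\<bar>ln Y - real n * ln X\<bar> \<le> ln 2"
proof -
  have pos: "0 < X ^ n" using assms(1) by simp
  have Y: "0 < Y" using assms(2) pos by linarith
  have "ln (X ^ n / 2) \<le> ln Y" "ln Y \<le> ln (2 * X ^ n)"
    using assms(2,3) Y pos by (auto intro!: ln_mono)
  moreover have "ln (X ^ n / 2) = real n * ln X - ln 2" "ln (2 * X ^ n) = ln 2 + real n * ln X"
    using assms(1) pos by (simp_all add: ln_div ln_mult ln_realpow)
  ultimately show ?thesis by linarith
qed

lemma logplus_nonneg: "0 \<le> logplus x"
  unfolding logplus_def by simp

lemma logplus_ge1: "1 \<le> x \<Longrightarrow> logplus x = ln x"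
  unfolding logplus_def by simp

lemma logplus_eq_ln_max1: "0 \<le> x \<Longrightarrow> logplus x = ln (max 1 x)"
  unfolding logplus_def by (cases "x = 0") (auto simp: max_def)

lemma logplus_mono: "0 \<le> x \<Longrightarrow> x \<le> y \<Longrightarrow> logplus x \<le> logplus y"
  unfolding logplus_def by (cases "x = 0") (auto intro: max.coboundedI2)

lemma logplus_max: "0 \<le> a \<Longrightarrow> 0 \<le> b \<Longrightarrow> logplus (max a b) = max (logplus a) (logplus b)"
  using logplus_mono[of a b] logplus_mono[of b a] by (auto simp: max_def)

lemma fixed_orbit: "poly p y = y \<Longrightarrow> (poly p ^^ k) y = y"
  by (induction k) auto

lemma poly_has_root:
  fixes P :: "complex poly"
  assumes "0 < degree P" shows "\<exists>z. poly P z = 0"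
  using fundamental_theorem_of_algebra constant_degree assms by (metis neq0_conv)

lemma degree_diff_lower: "degree (Q :: 'a::ab_group_add poly) < degree P \<Longrightarrow> degree (P - Q) = degree P"
  using degree_add_eq_left[of "-Q" P] by simp

(* p has a nonzero point with bounded orbit: a nonzero fixed point, or otherwise a nonzero
   preimage of the fixed point 0, or a nonzero root of p(x)/x - 1.  It is used to show that the
   escape region W_R can only lie inside the escaping set when R > 0. *)
lemma nonzero_bounded_orbit:
  fixes p :: "complex poly"
  assumes "2 \<le> degree p"
  shows "\<exists>x. x \<noteq> 0 \<and> (\<forall>k. cmod ((poly p ^^ k) x) \<le> cmod x)"
proof (cases "poly p 0 = 0")
  case False
  have "degree (p - [:0, 1:]) = degree p"
    by (rule degree_diff_lower) (use assms in auto)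
  then obtain y where "poly (p - [:0, 1:]) y = 0"
    using poly_has_root[of "p - [:0, 1:]"] assms by auto
  hence fy: "poly p y = y" by simp
  with False have "y \<noteq> 0" by auto
  thus ?thesis using fixed_orbit[OF fy] by auto
next
  case True
  then obtain r where pr: "p = [:0, 1:] * r" using poly_eq_0_iff_dvd[of p 0] by (auto elim: dvdE)
  have "r \<noteq> 0" using pr assms by auto
  hence dr: "1 \<le> degree r" using pr assms by (simp add: degree_mult_eq)
  obtain y1 where y1: "poly r y1 = 0" using poly_has_root[of r] dr by auto
  have "degree (r - 1) = degree r" by (rule degree_diff_lower) (use dr in auto)
  then obtain y2 where y2: "poly (r - 1) y2 = 0" using poly_has_root[of "r - 1"] dr by auto
  show ?thesis
  proof (cases "y1 = 0")
    case False
    have "(poly p ^^ Suc k) y1 = 0" for k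
      by (induction k) (use pr y1 True in auto)
    hence "cmod ((poly p ^^ k) y1) \<le> cmod y1" for k by (cases k) auto
    with False show ?thesis by auto
  next
    case True
    have "poly r y2 = 1" using y2 by simp
    hence "y2 \<noteq> 0" using True y1 by auto
    moreover have "poly p y2 = y2" using pr \<open>poly r y2 = 1\<close> by simp
    ultimately show ?thesis using fixed_orbit[of p y2] by auto
  qed
qed

lemma monic_poly_growth:
  fixes p :: "complex poly"
  assumes monic: "lead_coeff p = 1" and dg: "2 \<le> degree p"
  obtains R1 where "4 \<le> R1"
    "\<And>x. R1 \<le> cmod x \<Longrightarrow> cmod x ^ degree p / 2 \<le> cmod (poly p x) \<and> cmod (poly p x) \<le> 2 * cmod x ^ degree p"
proof -
  define \<delta> where "\<delta> = degree p"
  define S where "S = (\<Sum>i<\<delta>. cmod (coeff p i))"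
  have S0: "0 \<le> S" unfolding S_def by (simp add: sum_nonneg)
  have "cmod x ^ \<delta> / 2 \<le> cmod (poly p x) \<and> cmod (poly p x) \<le> 2 * cmod x ^ \<delta>"
    if x: "2 * S + 4 \<le> cmod x" for x
  proof -
    define low where "low = (\<Sum>i<\<delta>. coeff p i * x ^ i)"
    have x1: "1 \<le> cmod x" using x S0 by linarith
    have "poly p x = (\<Sum>i<Suc \<delta>. coeff p i * x ^ i)"
      unfolding poly_altdef \<delta>_def by (simp add: lessThan_Suc_atMost)
    hence px: "poly p x = low + x ^ \<delta>"
      using monic by (simp add: \<delta>_def low_def)
    have "cmod low \<le> (\<Sum>i<\<delta>. cmod (coeff p i) * cmod x ^ i)"
      unfolding low_def by (rule order.trans[OF norm_sum]) (simp add: norm_mult norm_power)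
    also have "\<dots> \<le> (\<Sum>i<\<delta>. cmod (coeff p i) * cmod x ^ (\<delta> - 1))"
      by (intro sum_mono mult_left_mono power_increasing) (use x1 in auto)
    also have "\<dots> = S * cmod x ^ (\<delta> - 1)" unfolding S_def by (simp add: sum_distrib_right)
    also have "\<dots> \<le> (cmod x / 2) * cmod x ^ (\<delta> - 1)"
      by (rule mult_right_mono) (use x in auto)
    also have "\<dots> = cmod x ^ \<delta> / 2"
      using dg unfolding \<delta>_def by (cases "degree p") (auto simp: power_Suc)
    finally have "cmod low \<le> cmod x ^ \<delta> / 2" .
    moreover have "cmod (x ^ \<delta>) - cmod low \<le> cmod (poly p x)" "cmod (poly p x) \<le> cmod (x ^ \<delta>) + cmod low"
      unfolding px by (metis add.commute norm_diff_ineq, metis add.commute norm_triangle_ineq)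
    ultimately show ?thesis by (simp add: norm_power)
  qed
  moreover have "4 \<le> 2 * S + 4" using S0 by linarith
  ultimately show ?thesis using that unfolding \<delta>_def by blast
qed

lemma escape_norm:
  assumes "z \<in> escape_set p" shows "\<exists>M. \<forall>n\<ge>M. B \<le> cmod ((poly p ^^ n) z)"
proof -
  have "filterlim (\<lambda>n. cmod ((poly p ^^ n) z)) at_top sequentially"
    using assms unfolding escape_set_def by (auto intro: filterlim_at_infinity_imp_norm_at_top)
  thus ?thesis by (simp add: filterlim_at_top eventually_sequentially)
qed

lemma bounded_not_escape:
  assumes "\<And>k. cmod ((poly p ^^ k) x) \<le> B" shows "x \<notin> escape_set p"
proof
  assume "x \<in> escape_set p"
  then obtain M where "\<forall>n\<ge>M. B + 1 \<le> cmod ((poly p ^^ n) x)" using escape_norm by blast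
  with assms[of M] show False by auto
qed

(* Outside a large disc p at least doubles the modulus, so any orbit entering it escapes. *)
lemma escape_if_big:
  fixes p :: "complex poly"
  assumes dg: "2 \<le> degree p" and R1: "4 \<le> R1"
    and H: "\<And>x. R1 \<le> cmod x \<Longrightarrow> cmod x ^ degree p / 2 \<le> cmod (poly p x)"
    and big: "R1 \<le> cmod ((poly p ^^ k) z)"
  shows "z \<in> escape_set p"
proof -
  have doubling: "2 * cmod x \<le> cmod (poly p x)" if x: "R1 \<le> cmod x" for x
  proof -
    have "4 * cmod x \<le> cmod x ^ 2" using x R1 by (simp add: power2_eq_square mult_right_mono)
    also have "\<dots> \<le> cmod x ^ degree p" using x R1 dg by (intro power_increasing) auto
    finally show ?thesis using H[OF x] by linarith
  qed
  have grow: "2 ^ j * R1 \<le> cmod ((poly p ^^ (j + k)) z)" for j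
  proof (induction j)
    case 0 thus ?case using big by simp
  next
    case (Suc j)
    have "R1 \<le> 2 ^ j * R1" using R1 by (simp add: mult_le_cancel_right1)
    hence "R1 \<le> cmod ((poly p ^^ (j + k)) z)" using Suc by linarith
    from doubling[OF this] show ?case using Suc by simp
  qed
  have "eventually (\<lambda>n. Y \<le> cmod ((poly p ^^ n) z)) sequentially" for Y :: real
  proof -
    obtain j where j: "Y < 2 ^ j" using real_arch_pow[of 2 Y] by auto
    have "Y \<le> cmod ((poly p ^^ n) z)" if "j + k \<le> n" for n
    proof -
      have "(2 :: real) ^ j \<le> 2 ^ (n - k)" using that by (intro power_increasing) auto
      also have "\<dots> \<le> 2 ^ (n - k) * R1" using R1 by (simp add: mult_le_cancel_left1)
      also have "\<dots> \<le> cmod ((poly p ^^ n) z)" using grow[of "n - k"] that by simp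
      finally show ?thesis using j by simp
    qed
    thus ?thesis unfolding eventually_sequentially by blast
  qed
  thus ?thesis unfolding escape_set_def filterlim_at_infinity_conv_norm_at_top filterlim_at_top by blast
qed

lemma nonescaping_orbit_bounded:
  fixes p :: "complex poly"
  assumes "lead_coeff p = 1" "2 \<le> degree p" "z \<notin> escape_set p"
  obtains R1 where "1 \<le> R1" "\<And>k. cmod ((poly p ^^ k) z) \<le> R1"
proof -
  obtain R1 where R1: "4 \<le> R1"
    and H: "\<And>x. R1 \<le> cmod x \<Longrightarrow> cmod x ^ degree p / 2 \<le> cmod (poly p x)"
    using monic_poly_growth[OF assms(1,2)] by metis
  have "cmod ((poly p ^^ k) z) \<le> R1" for k
    using escape_if_big[OF assms(2) R1 H, of k z] assms(3) by linarith
  with R1 show ?thesis by (intro that[of R1]) auto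
qed

lemma nonescaping_rate_zero:
  fixes p :: "complex poly"
  assumes "lead_coeff p = 1" "2 \<le> degree p" "z \<notin> escape_set p"
  shows "(\<lambda>n. logplus (cmod ((poly p ^^ n) z)) / real (degree p) ^ n) \<longlonglongrightarrow> 0"
proof -
  obtain R1 where "1 \<le> R1" and bound: "\<And>k. cmod ((poly p ^^ k) z) \<le> R1"
    using nonescaping_orbit_bounded[OF assms] by blast
  show ?thesis
    by (rule geometric_squeeze_zero[where L = 0 and d = 1 and A = "logplus R1"])
       (use assms(2) bound in \<open>auto simp: logplus_nonneg logplus_mono\<close>)
qed

lemma ln_poly_step:
  fixes p :: "complex poly"
  assumes monic: "lead_coeff p = 1" and dg: "2 \<le> degree p"
  obtains R1 where "1 \<le> R1"
    "\<And>x. R1 \<le> cmod x \<Longrightarrow> \<bar>ln (cmod (poly p x)) - real (degree p) * ln (cmod x)\<bar> \<le> ln 2"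
proof -
  obtain R1 where R1: "4 \<le> R1" and H: "\<And>x. R1 \<le> cmod x \<Longrightarrow>
      cmod x ^ degree p / 2 \<le> cmod (poly p x) \<and> cmod (poly p x) \<le> 2 * cmod x ^ degree p"
    using monic_poly_growth[OF monic dg] by metis
  have "\<bar>ln (cmod (poly p x)) - real (degree p) * ln (cmod x)\<bar> \<le> ln 2" if x: "R1 \<le> cmod x" for x
  proof -
    have "x \<noteq> 0" using x R1 by auto
    thus ?thesis using ln_near_power[of "cmod x" "degree p" "cmod (poly p x)"] H[OF x] by simp
  qed
  with R1 show ?thesis by (intro that[of R1]) auto
qed

(* The Green function of p is an actual limit at every point: the rate is 0 on bounded orbits,
   and on escaping orbits ln|z_n| is almost geometric (ln_poly_step). *)
lemma Green_p_limit:
  fixes p :: "complex poly"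
  assumes monic: "lead_coeff p = 1" and dg: "2 \<le> degree p"
  shows "(\<lambda>n. logplus (cmod ((poly p ^^ n) z)) / real (degree p) ^ n) \<longlonglongrightarrow> Green_p p z"
proof -
  define \<delta> where "\<delta> = real (degree p)"
  have \<delta>: "1 < \<delta>" using dg by (simp add: \<delta>_def)
  have "convergent (\<lambda>n. logplus (cmod ((poly p ^^ n) z)) / \<delta> ^ n)"
  proof (cases "z \<in> escape_set p")
    case False
    thus ?thesis using nonescaping_rate_zero[OF monic dg] unfolding \<delta>_def convergent_def by blast
  next
    case True
    obtain R1 where R1: "1 \<le> R1"
      and step: "\<And>x. R1 \<le> cmod x \<Longrightarrow> \<bar>ln (cmod (poly p x)) - \<delta> * ln (cmod x)\<bar> \<le> ln 2"
      using ln_poly_step[OF monic dg] unfolding \<delta>_def by blast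
    obtain M where M: "\<And>n. M \<le> n \<Longrightarrow> R1 \<le> cmod ((poly p ^^ n) z)"
      using escape_norm[OF True] by blast
    define a where "a k = ln (cmod ((poly p ^^ (k + M)) z))" for k
    have "\<bar>a (Suc k) - \<delta> * a k\<bar> \<le> ln 2" for k
      using step[OF M[of "k + M"]] by (simp add: a_def)
    then obtain La where La: "(\<lambda>k. a k / \<delta> ^ k) \<longlonglongrightarrow> La"
      using convergent_rate_of_almost_geometric[OF \<delta>] unfolding convergent_def by blast
    have "logplus (cmod ((poly p ^^ (k + M)) z)) = a k" for k
      using M[of "k + M"] R1 by (simp add: a_def logplus_ge1)
    hence "(\<lambda>k. logplus (cmod ((poly p ^^ (k + M)) z)) / \<delta> ^ k) \<longlonglongrightarrow> \<delta> ^ M * (La / \<delta> ^ M)"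
      using La \<delta> by simp
    hence "(\<lambda>n. logplus (cmod ((poly p ^^ n) z)) / \<delta> ^ n) \<longlonglongrightarrow> La / \<delta> ^ M"
      using rate_shift[where x = "\<lambda>n. logplus (cmod ((poly p ^^ n) z))" and M = M] \<delta> by simp
    thus ?thesis unfolding convergent_def by blast
  qed
  thus ?thesis unfolding Green_p_def \<delta>_def by (simp add: convergent_LIMSEQ_iff)
qed

lemma Green_p_nonneg:
  fixes p :: "complex poly"
  assumes "lead_coeff p = 1" "2 \<le> degree p"
  shows "0 \<le> Green_p p z"
  by (rule LIMSEQ_le_const[OF Green_p_limit[OF assms]]) (auto simp: logplus_nonneg)

lemma poly_sum_upto:
  fixes P :: "'a::comm_semiring_1 poly"
  assumes "degree P \<le> n" shows "poly P x = (\<Sum>i\<le>n. coeff P i * x ^ i)"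
proof -
  have "(\<Sum>i\<le>degree P. coeff P i * x ^ i) = (\<Sum>i\<le>n. coeff P i * x ^ i)"
    by (rule sum.mono_neutral_left) (use assms in \<open>auto simp: coeff_eq_0\<close>)
  thus ?thesis by (simp add: poly_altdef)
qed

lemma qeval_sum: "qeval q z w = (\<Sum>m\<le>degree q. poly (coeff q m) z * w ^ m)"
proof -
  have "degree (map_poly (\<lambda>a. poly a z) q) \<le> degree q"
    by (rule degree_le) (auto simp: coeff_map_poly coeff_eq_0)
  thus ?thesis unfolding qeval_def by (subst poly_sum_upto) (auto simp: coeff_map_poly)
qed

lemma qeval_norm:
  "cmod (qeval q z w) \<le> (\<Sum>m\<le>degree q. \<Sum>n\<le>degree (coeff q m).
      cmod (coeff (coeff q m) n) * (cmod z ^ n * cmod w ^ m))"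
proof -
  have "cmod (qeval q z w) \<le> (\<Sum>m\<le>degree q. cmod (poly (coeff q m) z) * cmod w ^ m)"
    unfolding qeval_sum by (rule order.trans[OF norm_sum]) (simp add: norm_mult norm_power)
  also have "\<dots> \<le> (\<Sum>m\<le>degree q. (\<Sum>n\<le>degree (coeff q m).
      cmod (coeff (coeff q m) n) * cmod z ^ n) * cmod w ^ m)"
  proof (intro sum_mono mult_right_mono)
    fix m
    show "cmod (poly (coeff q m) z) \<le> (\<Sum>n\<le>degree (coeff q m). cmod (coeff (coeff q m) n) * cmod z ^ n)"
      unfolding poly_altdef by (rule order.trans[OF norm_sum]) (simp add: norm_mult norm_power)
  qed simp
  also have "\<dots> = (\<Sum>m\<le>degree q. \<Sum>n\<le>degree (coeff q m).
      cmod (coeff (coeff q m) n) * (cmod z ^ n * cmod w ^ m))"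
    by (simp add: sum_distrib_right mult.assoc)
  finally show ?thesis .
qed

lemma qeval_bound_bounded_base:
  fixes q :: "complex poly poly"
  assumes "0 \<le> R1"
  obtains B where "1 \<le> B" "\<And>z w. cmod z \<le> R1 \<Longrightarrow> cmod (qeval q z w) \<le> B * max 1 (cmod w) ^ degree q"
proof -
  define S where "S = (\<Sum>m\<le>degree q. \<Sum>n\<le>degree (coeff q m). cmod (coeff (coeff q m) n) * R1 ^ n)"
  have "cmod (qeval q z w) \<le> max 1 S * max 1 (cmod w) ^ degree q" if z: "cmod z \<le> R1" for z w
  proof -
    have "cmod (qeval q z w) \<le> (\<Sum>m\<le>degree q. \<Sum>n\<le>degree (coeff q m).
      cmod (coeff (coeff q m) n) * (R1 ^ n * max 1 (cmod w) ^ degree q))"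
    proof (rule order.trans[OF qeval_norm], intro sum_mono mult_left_mono mult_mono)
      fix m n assume m: "m \<in> {..degree q}"
      show "cmod z ^ n \<le> R1 ^ n" using z by (intro power_mono) auto
      have "cmod w ^ m \<le> max 1 (cmod w) ^ m" by (intro power_mono) auto
      also have "\<dots> \<le> max 1 (cmod w) ^ degree q" using m by (intro power_increasing) auto
      finally show "cmod w ^ m \<le> max 1 (cmod w) ^ degree q" .
    qed (use assms in auto)
    also have "\<dots> = S * max 1 (cmod w) ^ degree q"
      by (simp add: S_def sum_distrib_right mult.assoc)
    also have "\<dots> \<le> max 1 S * max 1 (cmod w) ^ degree q"
      by (intro mult_right_mono) auto
    finally show ?thesis .
  qed
  thus ?thesis using that[of "max 1 S"] by auto
qed

(* Every monomial z^n w^m of q satisfies n \<le> \<alpha> (\<delta> - m): \<alpha> is the maximum of the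
   finite set of ratios n/(\<delta> - m), finite because n and m range over bounded sets. *)
lemma alpha_exp_bound:
  assumes "degree q < degree p" and nz: "coeff (coeff q m) n \<noteq> 0"
  shows "real n \<le> alpha_exp p q * (real (degree p) - real m)"
proof -
  define D where "D = (\<Sum>j\<le>degree q. degree (coeff q j))"
  define S where "S = {real n / (real (degree p) - real m) | n m. coeff (coeff q m) n \<noteq> 0}"
  have coeff_range: "n' \<le> D \<and> m' \<le> degree q" if "coeff (coeff q m') n' \<noteq> 0" for n' m'
  proof -
    have "coeff q m' \<noteq> 0" using that by auto
    hence m': "m' \<le> degree q" by (rule le_degree)
    have "n' \<le> degree (coeff q m')" using that by (rule le_degree)
    also have "\<dots> \<le> D" unfolding D_def by (rule member_le_sum) (use m' in auto)
    finally show ?thesis using m' by simp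
  qed
  have "S \<subseteq> (\<lambda>(n, m). real n / (real (degree p) - real m)) ` ({..D} \<times> {..degree q})"
    unfolding S_def using coeff_range by fastforce
  hence "finite S" by (rule finite_subset) auto
  hence "real n / (real (degree p) - real m) \<le> alpha_exp p q"
    unfolding alpha_exp_def S_def[symmetric] by (rule Max_ge) (use nz in \<open>auto simp: S_def\<close>)
  moreover have "0 < real (degree p) - real m" using coeff_range[OF nz] assms(1) by linarith
  ultimately show ?thesis by (simp add: pos_divide_le_eq mult.commute)
qed

lemma qeval_bound_W:
  fixes q :: "complex poly poly" and \<alpha> R :: real and \<delta> \<gamma> :: nat
  assumes R: "0 < R" and z1: "1 \<le> cmod z" and w: "R * cmod z powr \<alpha> < cmod w"
    and al: "\<alpha> * (real \<delta> - real (degree q)) = real \<gamma>"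
    and nb: "\<And>m n. coeff (coeff q m) n \<noteq> 0 \<Longrightarrow> real n \<le> \<alpha> * (real \<delta> - real m)"
  shows "cmod (qeval q z w) \<le> (\<Sum>m\<le>degree q. \<Sum>n\<le>degree (coeff q m).
      cmod (coeff (coeff q m) n) * (1 / R) ^ (degree q - m)) * (cmod z ^ \<gamma> * cmod w ^ degree q)"
proof -
  define d where "d = degree q"
  have zp: "0 < cmod z" using z1 by linarith
  have monomial: "cmod (coeff (coeff q m) n) * (cmod z ^ n * cmod w ^ m)
     \<le> cmod (coeff (coeff q m) n) * (1 / R) ^ (d - m) * (cmod z ^ \<gamma> * cmod w ^ d)"
    if m: "m \<le> d" for m n
  proof (cases "coeff (coeff q m) n = 0")
    case False
    have n_le: "real n \<le> \<gamma> + \<alpha> * real (d - m)"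
      using nb[OF False] al m unfolding d_def by (simp add: of_nat_diff algebra_simps)
    have "cmod z ^ n = cmod z powr real n" using zp by (simp add: powr_realpow)
    also have "\<dots> \<le> cmod z powr (\<gamma> + \<alpha> * real (d - m))" by (rule powr_mono[OF n_le z1])
    also have "\<dots> = cmod z ^ \<gamma> * (cmod z powr \<alpha>) ^ (d - m)"
      using zp by (simp add: powr_add powr_realpow powr_power mult.commute)
    also have "\<dots> \<le> cmod z ^ \<gamma> * (cmod w / R) ^ (d - m)"
      using w R by (intro mult_left_mono power_mono) (auto simp: field_simps)
    finally have "cmod z ^ n * cmod w ^ m \<le> cmod z ^ \<gamma> * (cmod w / R) ^ (d - m) * cmod w ^ m"
      by (rule mult_right_mono) simp
    also have "\<dots> = (1 / R) ^ (d - m) * (cmod z ^ \<gamma> * cmod w ^ d)"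
      using m by (simp add: power_divide field_simps flip: power_add)
    finally show ?thesis by (simp add: mult_left_mono mult.assoc)
  qed simp
  have "cmod (qeval q z w) \<le> (\<Sum>m\<le>d. \<Sum>n\<le>degree (coeff q m).
      cmod (coeff (coeff q m) n) * (1 / R) ^ (d - m) * (cmod z ^ \<gamma> * cmod w ^ d))"
    unfolding d_def by (rule order.trans[OF qeval_norm], intro sum_mono) (use monomial in \<open>auto simp: d_def\<close>)
  thus ?thesis by (simp add: d_def sum_distrib_right)
qed

lemma ln_qeval_bound_W:
  fixes q :: "complex poly poly" and \<alpha> R :: real and \<delta> \<gamma> :: nat
  assumes R: "0 < R" and al: "\<alpha> * (real \<delta> - real (degree q)) = real \<gamma>"
    and nb: "\<And>m n. coeff (coeff q m) n \<noteq> 0 \<Longrightarrow> real n \<le> \<alpha> * (real \<delta> - real m)"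
  obtains K where "\<And>z w. 1 \<le> cmod z \<Longrightarrow> R * cmod z powr \<alpha> < cmod w \<Longrightarrow> qeval q z w \<noteq> 0 \<Longrightarrow>
      ln (cmod (qeval q z w)) \<le> K + real \<gamma> * ln (cmod z) + real (degree q) * ln (cmod w)"
proof -
  define S where "S = (\<Sum>m\<le>degree q. \<Sum>n\<le>degree (coeff q m).
      cmod (coeff (coeff q m) n) * (1 / R) ^ (degree q - m))"
  define K where "K = max 1 S"
  have "ln (cmod (qeval q z w)) \<le> ln K + real \<gamma> * ln (cmod z) + real (degree q) * ln (cmod w)"
    if z1: "1 \<le> cmod z" and w: "R * cmod z powr \<alpha> < cmod w" and nz: "qeval q z w \<noteq> 0" for z w
  proof -
    have zp: "0 < cmod z" using z1 by linarith
    have wp: "0 < cmod w" using w R zp by (smt (verit) mult_pos_pos powr_gt_zero)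
    have "cmod (qeval q z w) \<le> S * (cmod z ^ \<gamma> * cmod w ^ degree q)"
      unfolding S_def by (rule qeval_bound_W[OF R z1 w al nb])
    also have "\<dots> \<le> K * (cmod z ^ \<gamma> * cmod w ^ degree q)"
      unfolding K_def by (rule mult_right_mono) auto
    finally have "ln (cmod (qeval q z w)) \<le> ln (K * (cmod z ^ \<gamma> * cmod w ^ degree q))"
      using nz by (intro ln_mono) auto
    also have "\<dots> = ln K + real \<gamma> * ln (cmod z) + real (degree q) * ln (cmod w)"
      using zp wp by (simp add: K_def ln_mult ln_realpow)
    finally show ?thesis .
  qed
  thus ?thesis by (rule that)
qed

lemma fmap_iter: "(fmap p q ^^ n) (z, w) = ((poly p ^^ n) z, Qiter p q n z w)"
  by (induction n) (auto simp: fmap_def)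

lemma invariant_orbit:
  assumes inv: "g ` S \<subseteq> S" and start: "(g ^^ N) x \<in> S" and "N \<le> n"
  shows "(g ^^ n) x \<in> S"
proof -
  have "(g ^^ (k + N)) x \<in> S" for k
    by (induction k) (use start inv in auto)
  thus ?thesis using \<open>N \<le> n\<close> by (metis le_add_diff_inverse2)
qed

(* If W_R lies over the escaping set, then R > 0: otherwise (x,1) \<in> W_R for the point x of
   nonzero_bounded_orbit, whose orbit does not escape. *)
lemma W_radius_pos:
  fixes p :: "complex poly"
  assumes "2 \<le> degree p" and W_esc: "W_set \<alpha> R \<subseteq> escape_set p \<times> UNIV"
  shows "0 < R"
proof (rule ccontr)
  assume "\<not> 0 < R"
  obtain x0 where x0: "x0 \<noteq> 0" "\<forall>k. cmod ((poly p ^^ k) x0) \<le> cmod x0"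
    using nonzero_bounded_orbit[OF assms(1)] by blast
  have "R * cmod x0 powr \<alpha> \<le> 0" using \<open>\<not> 0 < R\<close> by (intro mult_nonpos_nonneg) auto
  moreover have "R < cmod x0" using \<open>\<not> 0 < R\<close> x0(1) by (smt (verit) zero_less_norm_iff)
  ultimately have "(x0, 1) \<in> W_set \<alpha> R" unfolding W_set_def by auto
  hence "x0 \<in> escape_set p" using W_esc by auto
  with bounded_not_escape[of p x0 "cmod x0"] x0(2) show False by blast
qed

lemma Qiter_rate_bounded_base:
  fixes p :: "complex poly" and q :: "complex poly poly"
  assumes dq: "2 \<le> degree q" and dqp: "degree q < degree p"
    and R1: "0 \<le> R1" and bounded: "\<And>n. cmod ((poly p ^^ n) z) \<le> R1"
  shows "(\<lambda>n. logplus (cmod (Qiter p q n z w)) / real (degree p) ^ n) \<longlonglongrightarrow> 0"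
proof -
  obtain B where B: "1 \<le> B"
    and qb: "\<And>z w. cmod z \<le> R1 \<Longrightarrow> cmod (qeval q z w) \<le> B * max 1 (cmod w) ^ degree q"
    using qeval_bound_bounded_base[OF R1] by blast
  define t where "t n = logplus (cmod (Qiter p q n z w))" for n
  have t_rec: "t (Suc n) \<le> ln B + real (degree q) * t n" for n
  proof -
    define X where "X = max 1 (cmod (Qiter p q n z w))"
    have X: "1 \<le> X" by (simp add: X_def)
    hence "B \<le> B * X ^ degree q" using B by (simp add: mult_le_cancel_left1 one_le_power)
    hence BX: "1 \<le> B * X ^ degree q" using B by linarith
    have "cmod (Qiter p q (Suc n) z w) \<le> B * X ^ degree q"
      unfolding X_def using qb[OF bounded[of n]] by simp
    hence "t (Suc n) \<le> logplus (B * X ^ degree q)"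
      unfolding t_def by (intro logplus_mono) simp_all
    also have "\<dots> = ln B + real (degree q) * ln X"
      using B X BX by (simp add: logplus_ge1 ln_mult ln_realpow)
    also have "ln X = t n" by (simp add: X_def t_def logplus_eq_ln_max1)
    finally show ?thesis .
  qed
  have "t n \<le> real (degree q) ^ n * (\<bar>t 0\<bar> + ln B)" for n
    using rec_bound[of "ln B" "real (degree q)" t n] t_rec dq ln_ge_zero[OF B] by auto
  thus ?thesis
    using geometric_squeeze_zero[of 0 t "real (degree q)" "\<bar>t 0\<bar> + ln B" "real (degree p)"] dq dqp
    by (auto simp: t_def logplus_nonneg)
qed

lemma W_set_defect_lower:
  assumes W: "(z, w) \<in> W_set \<alpha> R" and R: "0 < R"
  shows "w \<noteq> 0" "ln R \<le> ln (cmod w) - \<alpha> * ln (cmod z)"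
proof -
  have z: "0 < cmod z" and w: "R * cmod z powr \<alpha> < cmod w"
    using W R unfolding W_set_def by auto
  moreover have pos: "0 < R * cmod z powr \<alpha>" using z R by simp
  ultimately show "w \<noteq> 0" by auto
  have "ln R + \<alpha> * ln (cmod z) = ln (R * cmod z powr \<alpha>)"
    using z R by (simp add: ln_mult ln_powr)
  also have "\<dots> \<le> ln (cmod w)" using w pos by (intro ln_mono) auto
  finally show "ln R \<le> ln (cmod w) - \<alpha> * ln (cmod z)" by simp
qed

(* Along an escaping base orbit that eventually stays in W_R, from some index M on the
   sequences a_k = ln|z_{k+M}| and u_k = ln|w_{k+M}| satisfy the hypotheses of defect_negligible. *)
lemma W_orbit_defect_negligible:
  fixes p :: "complex poly" and q :: "complex poly poly" and \<alpha> R :: real and \<gamma> :: nat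
  assumes monic: "lead_coeff p = 1" and dg: "2 \<le> degree p"
    and dq: "2 \<le> degree q" and dqp: "degree q < degree p"
    and al: "\<alpha> * (real (degree p) - real (degree q)) = real \<gamma>"
    and nb: "\<And>m n. coeff (coeff q m) n \<noteq> 0 \<Longrightarrow> real n \<le> \<alpha> * (real (degree p) - real m)"
    and R: "0 < R" and esc: "z \<in> escape_set p"
    and inW: "\<And>n. N \<le> n \<Longrightarrow> (fmap p q ^^ n) (z, w) \<in> W_set \<alpha> R"
  obtains M where "\<And>k. 1 \<le> cmod ((poly p ^^ (k + M)) z)"
    "(\<lambda>k. (ln (cmod (Qiter p q (k + M) z w)) - \<alpha> * ln (cmod ((poly p ^^ (k + M)) z)))
        / real (degree p) ^ k) \<longlonglongrightarrow> 0"
proof -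
  define \<delta> where "\<delta> = real (degree p)"
  define d where "d = real (degree q)"
  define zn where "zn n = (poly p ^^ n) z" for n
  define wn where "wn n = Qiter p q n z w" for n
  have "0 \<le> \<alpha> * (real (degree p) - real (degree q))" using al by simp
  hence \<alpha>: "0 \<le> \<alpha>" using dqp by (simp add: zero_le_mult_iff)
  obtain R1 where R1: "1 \<le> R1"
    and step: "\<And>x. R1 \<le> cmod x \<Longrightarrow> \<bar>ln (cmod (poly p x)) - \<delta> * ln (cmod x)\<bar> \<le> ln 2"
    using ln_poly_step[OF monic dg] unfolding \<delta>_def by blast
  obtain K where K: "\<And>z w. 1 \<le> cmod z \<Longrightarrow> R * cmod z powr \<alpha> < cmod w \<Longrightarrow> qeval q z w \<noteq> 0 \<Longrightarrow>
      ln (cmod (qeval q z w)) \<le> K + real \<gamma> * ln (cmod z) + d * ln (cmod w)"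
    using ln_qeval_bound_W[OF R al nb] unfolding d_def by blast
  obtain M0 where M0: "\<And>n. M0 \<le> n \<Longrightarrow> R1 \<le> cmod (zn n)"
    using escape_norm[OF esc] unfolding zn_def by blast
  define M where "M = max M0 N"
  have big: "R1 \<le> cmod (zn (k + M))" for k using M0 by (simp add: M_def)
  have W: "(zn (k + M), wn (k + M)) \<in> W_set \<alpha> R" for k
    using inW[of "k + M"] by (simp add: M_def fmap_iter zn_def wn_def)
  define a where "a k = ln (cmod (zn (k + M)))" for k
  define u where "u k = ln (cmod (wn (k + M)))" for k
  have a_rec: "\<delta> * a k - ln 2 \<le> a (Suc k)" for k
    using step[OF big[of k]] by (simp add: a_def zn_def abs_le_iff)
  have u_rec: "u (Suc k) \<le> max 0 K + real \<gamma> * a k + d * u k" for k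
  proof -
    have next_w: "wn (Suc k + M) = qeval q (zn (k + M)) (wn (k + M))"
      by (simp add: zn_def wn_def)
    have "1 \<le> cmod (zn (k + M))" using big[of k] R1 by linarith
    from K[OF this] W[of k] W_set_defect_lower(1)[OF W[of "Suc k"] R]
    have "u (Suc k) \<le> K + real \<gamma> * a k + d * u k"
      unfolding u_def a_def next_w by (simp add: W_set_def)
    thus ?thesis by linarith
  qed
  have lower: "ln R \<le> u k - \<alpha> * a k" for k
    using W_set_defect_lower(2)[OF W[of k] R] by (simp add: a_def u_def)
  have defect: "(\<lambda>k. (u k - \<alpha> * a k) / \<delta> ^ k) \<longlonglongrightarrow> 0"
    by (rule defect_negligible[where a = a and u = u and \<alpha> = \<alpha> and d = d and \<delta> = \<delta>,
          OF _ _ \<alpha> _ _ _ a_rec u_rec lower])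
       (use dq dqp al in \<open>auto simp: \<delta>_def d_def\<close>)
  have "1 \<le> cmod (zn (k + M))" for k using big[of k] R1 by linarith
  with defect show ?thesis by (intro that[of M]) (simp_all add: a_def u_def zn_def wn_def \<delta>_def)
qed

lemma Qiter_rate_escaping:
  fixes p :: "complex poly" and q :: "complex poly poly" and \<alpha> R :: real and \<gamma> :: nat
  assumes monic: "lead_coeff p = 1" and dg: "2 \<le> degree p"
    and "2 \<le> degree q" and dqp: "degree q < degree p"
    and al: "\<alpha> * (real (degree p) - real (degree q)) = real \<gamma>"
    and "\<And>m n. coeff (coeff q m) n \<noteq> 0 \<Longrightarrow> real n \<le> \<alpha> * (real (degree p) - real m)"
    and "0 < R" "z \<in> escape_set p"
    and "\<And>n. N \<le> n \<Longrightarrow> (fmap p q ^^ n) (z, w) \<in> W_set \<alpha> R"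
  shows "(\<lambda>n. logplus (cmod (Qiter p q n z w)) / real (degree p) ^ n) \<longlonglongrightarrow> \<alpha> * Green_p p z"
proof -
  define \<delta> where "\<delta> = real (degree p)"
  have \<delta>: "0 < \<delta>" using dg by (simp add: \<delta>_def)
  have "0 \<le> \<alpha> * (real (degree p) - real (degree q))" using al by simp
  hence \<alpha>: "0 \<le> \<alpha>" using dqp by (simp add: zero_le_mult_iff)
  obtain M where big: "\<And>k. 1 \<le> cmod ((poly p ^^ (k + M)) z)"
    and defect: "(\<lambda>k. (ln (cmod (Qiter p q (k + M) z w)) - \<alpha> * ln (cmod ((poly p ^^ (k + M)) z)))
        / \<delta> ^ k) \<longlonglongrightarrow> 0"
    using W_orbit_defect_negligible[OF assms] unfolding \<delta>_def by blast
  define a where "a k = ln (cmod ((poly p ^^ (k + M)) z))" for k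
  define u where "u k = ln (cmod (Qiter p q (k + M) z w))" for k
  have "(\<lambda>n. logplus (cmod ((poly p ^^ n) z)) / \<delta> ^ n) \<longlonglongrightarrow> Green_p p z"
    using Green_p_limit[OF monic dg] by (simp add: \<delta>_def)
  hence "(\<lambda>k. logplus (cmod ((poly p ^^ (k + M)) z)) / \<delta> ^ k) \<longlonglongrightarrow> \<delta> ^ M * Green_p p z"
    using rate_shift[OF \<delta>, where x = "\<lambda>n. logplus (cmod ((poly p ^^ n) z))" and M = M] by simp
  moreover have "logplus (cmod ((poly p ^^ (k + M)) z)) = a k" for k
    using big[of k] by (simp add: a_def logplus_ge1)
  ultimately have "(\<lambda>k. (u k - \<alpha> * a k) / \<delta> ^ k + \<alpha> * (a k / \<delta> ^ k)) \<longlonglongrightarrow> 0 + \<alpha> * (\<delta> ^ M * Green_p p z)"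
    using defect unfolding a_def u_def by (intro tendsto_add tendsto_mult_left) simp_all
  hence "(\<lambda>k. max 0 (u k / \<delta> ^ k)) \<longlonglongrightarrow> max 0 (\<alpha> * (\<delta> ^ M * Green_p p z))"
    by (intro tendsto_max tendsto_const) (simp add: diff_divide_distrib)
  moreover have "max 0 (u k / \<delta> ^ k) = logplus (cmod (Qiter p q (k + M) z w)) / \<delta> ^ k" for k
    using \<delta> by (simp add: logplus_def u_def max_divide_distrib_right)
  moreover have "max 0 (\<alpha> * (\<delta> ^ M * Green_p p z)) = \<delta> ^ M * (\<alpha> * Green_p p z)"
    using \<alpha> \<delta> Green_p_nonneg[OF monic dg, of z] by simp
  ultimately have "(\<lambda>k. logplus (cmod (Qiter p q (k + M) z w)) / \<delta> ^ k) \<longlonglongrightarrow> \<delta> ^ M * (\<alpha> * Green_p p z)"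
    by simp
  thus ?thesis
    using rate_shift[OF \<delta>, where x = "\<lambda>n. logplus (cmod (Qiter p q n z w))" and M = M]
    by (simp add: \<delta>_def)
qed

lemma Qiter_rate:
  fixes p :: "complex poly" and q :: "complex poly poly" and R :: real
  assumes monic: "lead_coeff p = 1" and dg: "2 \<le> degree p"
    and dq: "2 \<le> degree q" and dqp: "degree q < degree p"
    and alpha_eq: "alpha_exp p q = real (degree (lead_coeff q)) / (real (degree p) - real (degree q))"
    and R_inv: "fmap p q ` W_set (alpha_exp p q) R \<subseteq> W_set (alpha_exp p q) R"
    and R_esc: "W_set (alpha_exp p q) R \<subseteq> escape_set p \<times> UNIV"
    and zw: "(z, w) \<notin> B_f p q R"
  shows "(\<lambda>n. logplus (cmod (Qiter p q n z w)) / real (degree p) ^ n) \<longlonglongrightarrow> alpha_exp p q * Green_p p z"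
proof (cases "z \<in> escape_set p")
  case False
  obtain R1 where R1: "1 \<le> R1" and bounded: "\<And>k. cmod ((poly p ^^ k) z) \<le> R1"
    using nonescaping_orbit_bounded[OF monic dg False] by blast
  have "(\<lambda>n. logplus (cmod (Qiter p q n z w)) / real (degree p) ^ n) \<longlonglongrightarrow> 0"
    by (rule Qiter_rate_bounded_base[OF dq dqp _ bounded]) (use R1 in simp)
  moreover have "Green_p p z = 0"
    using LIMSEQ_unique[OF Green_p_limit nonescaping_rate_zero] monic dg False by blast
  ultimately show ?thesis by simp
next
  case True
  with zw obtain N where N: "(fmap p q ^^ N) (z, w) \<in> W_set (alpha_exp p q) R"
    unfolding B_f_def A_f_def by auto
  show ?thesis
  proof (rule Qiter_rate_escaping[OF monic dg dq dqp _ alpha_exp_bound[OF dqp] _ True])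
    show "alpha_exp p q * (real (degree p) - real (degree q)) = real (degree (lead_coeff q))"
      using alpha_eq dqp by simp
    show "0 < R" using W_radius_pos[OF dg R_esc] .
    show "(fmap p q ^^ n) (z, w) \<in> W_set (alpha_exp p q) R" if "N \<le> n" for n
      using invariant_orbit[OF R_inv N that] .
  qed
qed

theorem corollary4p10:
  fixes p :: "complex poly" and q :: "complex poly poly" and R :: real
  assumes p_monic: "lead_coeff p = 1" and delta_ge: "degree p \<ge> 2"
    and d_ge: "degree q \<ge> 2"
    and b_monic: "lead_coeff (lead_coeff q) = 1"
    and delta_gt_d: "degree p > degree q"
    and alpha_eq: "alpha_exp p q = real (degree (lead_coeff q)) / (real (degree p) - real (degree q))"
    and not_prod: "\<not> poly_product q"
    and R_inv: "fmap p q ` W_set (alpha_exp p q) R \<subseteq> W_set (alpha_exp p q) R"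
    and R_esc: "W_set (alpha_exp p q) R \<subseteq> escape_set p \<times> UNIV"
    and zw: "(z, w) \<notin> B_f p q R"
  shows "((\<lambda>n. logplus (cmod (Qiter p q n z w)) / real (degree p) ^ n)
            \<longlonglongrightarrow> alpha_exp p q * Green_p p z)
       \<and> ((\<lambda>n. logplus (maxnorm ((fmap p q ^^ n) (z, w))) / real (degree p) ^ n)
            \<longlonglongrightarrow> max (alpha_exp p q) 1 * Green_p p z)"
proof -
  let ?\<delta> = "real (degree p)" and ?\<alpha> = "alpha_exp p q" and ?G = "Green_p p z"
  have w_rate: "(\<lambda>n. logplus (cmod (Qiter p q n z w)) / ?\<delta> ^ n) \<longlonglongrightarrow> ?\<alpha> * ?G"
    using Qiter_rate[OF p_monic delta_ge d_ge delta_gt_d alpha_eq R_inv R_esc zw] .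
  have z_rate: "(\<lambda>n. logplus (cmod ((poly p ^^ n) z)) / ?\<delta> ^ n) \<longlonglongrightarrow> ?G"
    using Green_p_limit[OF p_monic delta_ge] .
  have "(\<lambda>n. max (logplus (cmod ((poly p ^^ n) z)) / ?\<delta> ^ n) (logplus (cmod (Qiter p q n z w)) / ?\<delta> ^ n))
      \<longlonglongrightarrow> max ?G (?\<alpha> * ?G)"
    by (intro tendsto_max z_rate w_rate)
  moreover have "max ?G (?\<alpha> * ?G) = max ?\<alpha> 1 * ?G"
    using Green_p_nonneg[OF p_monic delta_ge] by (simp add: max_mult_distrib_right max.commute)
  moreover have "logplus (maxnorm ((fmap p q ^^ n) (z, w))) / ?\<delta> ^ n
      = max (logplus (cmod ((poly p ^^ n) z)) / ?\<delta> ^ n) (logplus (cmod (Qiter p q n z w)) / ?\<delta> ^ n)" for n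
    by (simp add: fmap_iter maxnorm_def logplus_max max_divide_distrib_right)
  ultimately show ?thesis using w_rate by simp
qed

end
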